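(* For every integer $r$, \[\mathcal{H}^r_k = \big(f(D)\,\partial(\overline{L}^\times)\big)^{G_k}\big/\iota(k^\times)\partial(L^\times),\] where $D\in\operatorname{Div}(X_{\overline{k}})$ is any good divisor of degree $r$ (the coset $f(D)\partial(\overline{L}^\times)\subset \overline{M}^\times$ is independent of the choice). In particular $\mathcal{H}^0_k=\partial(\overline{L}^\times)^{G_k}/\iota(k^\times)\partial(L^\times)$.
   Context: Let $p$ be a prime, $k$ a field of characteristic $\neq p$ containing the $p$-th roots of unity, $\overline{k}$ a separable closure, $G_k=\mathrm{Gal}(\overline{k}/k)$. Let $X$ be a smooth projective curve over $k$ with a degree $p$ cyclic cover $X\to\mathbb{P}^1$ over $k$, unramified above $\infty$, given by an affine model $y^p=c\,h(x)$ with $c\in k^\times$ and $h\in k[x]$ monic, $p$-th-power-free, of degree $n$ divisible by $p$; the branch points are the roots of $h$. Let $\Omega\subset X(\overline{k})$ be the set of ramification points, $x(\omega)$ the $x$-coordinate of $\omega$, and $\mathfrak{m}$ the pullback of $\infty$. Write $h=\prod_{i=1}^e h_i^{n_i}$ with distinct monic irreducible $h_i$; let $L=k[x]/(h_1\cdots h_e)\cong K_1\times\dots\times K_e$ ($K_i=k[x]/(h_i)$), and $N:L\to k$ the weighted norm $N(\alpha_1,\dots,\alpha_e)=\prod_i N_{K_i/k}(\alpha_i)^{n_i}$. Let $M=L\times k$, $\partial:L^\times\to M^\times$, $\alpha\mapsto(\alpha^p,N(\alpha))$, and $\iota:k^\times\to M^\times$, $a\mapsto(a,a^{n/p})$. Write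 $\overline{L}=L\otimes_k\overline{k}\cong\mathrm{Map}(\Omega,\overline{k})$, $\overline{M}=M\otimes_k\overline{k}$, with the same maps extended. A divisor on $X_{\overline{k}}$ is good if its support is disjoint from $\Omega$ and from the support of $\mathfrak{m}$. For an affine point $P=(x_0,y_0)\in X(\overline{k})$ not in $\Omega$, set $f(P)=\big((x_0-x(\omega))_{\omega\in\Omega},\,y_0\big)\in \overline{L}^\times\times\overline{k}^\times=\overline{M}^\times$, and for a good divisor $D=\sum n_P[P]$ set $f(D)=\prod_P f(P)^{n_P}$. For $r\in\mathbb{Z}$, \[\mathcal{H}^r_k=\frac{\{(\alpha,s)\in L^\times\times k^\times: c^rN(\alpha)=s^p\}}{\{(\gamma\alpha^p,\gamma^{n/p}N(\alpha)):\alpha\in L^\times,\gamma\in k^\times\}}\subset M^\times/\iota(k^\times)\partial(L^\times).\] *)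

theory Defs
  imports "HOL-Computational_Algebra.Polynomial"
begin

text \<open>Model: the separable closure kbar is the whole type 'a; the base field k is a subset.\<close>

definition is_subfield :: "'a::field set \<Rightarrow> bool" where
  "is_subfield k \<longleftrightarrow> 0 \<in> k \<and> 1 \<in> k \<and> (\<forall>x\<in>k. \<forall>y\<in>k. x + y \<in> k \<and> x * y \<in> k)
     \<and> (\<forall>x\<in>k. - x \<in> k \<and> inverse x \<in> k)"

definition poly_over :: "'a::field set \<Rightarrow> 'a poly \<Rightarrow> bool" where
  "poly_over k g \<longleftrightarrow> (\<forall>i. coeff g i \<in> k)"

definition separable_poly :: "'a::field poly \<Rightarrow> bool" where
  "separable_poly g \<longleftrightarrow> coprime g (pderiv g)"

definition is_separable_closure_of :: "'a::field set \<Rightarrow> bool" where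
  "is_separable_closure_of k \<longleftrightarrow> is_subfield k
     \<and> (\<forall>x. \<exists>g. g \<noteq> 0 \<and> poly_over k g \<and> separable_poly g \<and> poly g x = 0)
     \<and> (\<forall>g::'a poly. degree g > 0 \<longrightarrow> separable_poly g \<longrightarrow> (\<exists>x. poly g x = 0))"

definition Gal :: "'a::field set \<Rightarrow> ('a \<Rightarrow> 'a) set" where
  "Gal k = {\<sigma>. bij \<sigma> \<and> (\<forall>x y. \<sigma> (x + y) = \<sigma> x + \<sigma> y) \<and> (\<forall>x y. \<sigma> (x * y) = \<sigma> x * \<sigma> y)
              \<and> (\<forall>x\<in>k. \<sigma> x = x)}"

text \<open>Omega is identified with the set of roots of h in kbar (the branch points).\<close>
definition Rts :: "'a::field poly \<Rightarrow> 'a set" where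
  "Rts h = {\<omega>. poly h \<omega> = 0}"

text \<open>Elements of Lbar^x = Map(Omega, kbar^x), normalised to 1 off Omega.\<close>
definition Lbar_units :: "'a::field poly \<Rightarrow> ('a \<Rightarrow> 'a) set" where
  "Lbar_units h = {\<alpha>. (\<forall>\<omega>\<in>Rts h. \<alpha> \<omega> \<noteq> 0) \<and> (\<forall>\<omega>. \<omega> \<notin> Rts h \<longrightarrow> \<alpha> \<omega> = 1)}"

text \<open>L^x = (k[x]/(h_1...h_e))^x, embedded in Lbar^x via evaluation at the roots.\<close>
definition L_units :: "'a::field set \<Rightarrow> 'a poly \<Rightarrow> ('a \<Rightarrow> 'a) set" where
  "L_units k h = {\<alpha> \<in> Lbar_units h. \<exists>g. poly_over k g \<and> (\<forall>\<omega>\<in>Rts h. \<alpha> \<omega> = poly g \<omega>)}"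

text \<open>Weighted norm N(alpha) = prod_i N_{K_i/k}(alpha_i)^{n_i}, written over kbar.\<close>
definition wnorm :: "'a::field poly \<Rightarrow> ('a \<Rightarrow> 'a) \<Rightarrow> 'a" where
  "wnorm h \<alpha> = (\<Prod>\<omega>\<in>Rts h. \<alpha> \<omega> ^ order \<omega> h)"

text \<open>Mbar^x = Lbar^x \<times> kbar^x with componentwise multiplication.\<close>
definition mmul :: "('a \<Rightarrow> 'a::field) \<times> 'a \<Rightarrow> ('a \<Rightarrow> 'a) \<times> 'a \<Rightarrow> ('a \<Rightarrow> 'a) \<times> 'a" where
  "mmul m m' = ((\<lambda>\<omega>. fst m \<omega> * fst m' \<omega>), snd m * snd m')"

definition bd :: "nat \<Rightarrow> 'a::field poly \<Rightarrow> ('a \<Rightarrow> 'a) \<Rightarrow> ('a \<Rightarrow> 'a) \<times> 'a" where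
  "bd p h \<alpha> = ((\<lambda>\<omega>. \<alpha> \<omega> ^ p), wnorm h \<alpha>)"

definition iota :: "nat \<Rightarrow> 'a::field poly \<Rightarrow> 'a \<Rightarrow> ('a \<Rightarrow> 'a) \<times> 'a" where
  "iota p h a = ((\<lambda>\<omega>. if \<omega> \<in> Rts h then a else 1), a ^ (degree h div p))"

definition Hsub :: "'a::field set \<Rightarrow> nat \<Rightarrow> 'a poly \<Rightarrow> (('a \<Rightarrow> 'a) \<times> 'a) set" where
  "Hsub k p h = {mmul (iota p h \<gamma>) (bd p h \<alpha>) | \<gamma> \<alpha>. \<gamma> \<in> k \<and> \<gamma> \<noteq> 0 \<and> \<alpha> \<in> L_units k h}"

definition mcoset :: "('a \<Rightarrow> 'a::field) \<times> 'a \<Rightarrow> (('a \<Rightarrow> 'a) \<times> 'a) set \<Rightarrow> (('a \<Rightarrow> 'a) \<times> 'a) set" where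
  "mcoset m S = mmul m ` S"

text \<open>H^r_k as a subset of M^x / iota(k^x) bd(L^x) (a set of cosets).\<close>
definition Hcal :: "'a::field set \<Rightarrow> nat \<Rightarrow> 'a \<Rightarrow> 'a poly \<Rightarrow> int \<Rightarrow> (('a \<Rightarrow> 'a) \<times> 'a) set set" where
  "Hcal k p c h r = (\<lambda>m. mcoset m (Hsub k p h)) `
      {(\<alpha>, s). \<alpha> \<in> L_units k h \<and> s \<in> k \<and> s \<noteq> 0 \<and> c powi r * wnorm h \<alpha> = s ^ p}"

definition gact :: "'a::field poly \<Rightarrow> ('a \<Rightarrow> 'a) \<Rightarrow> ('a \<Rightarrow> 'a) \<times> 'a \<Rightarrow> ('a \<Rightarrow> 'a) \<times> 'a" where
  "gact h \<sigma> m = ((\<lambda>\<omega>. if \<omega> \<in> Rts h then \<sigma> (fst m (inv \<sigma> \<omega>)) else 1), \<sigma> (snd m))"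

definition invariants :: "'a::field set \<Rightarrow> 'a poly \<Rightarrow> (('a \<Rightarrow> 'a) \<times> 'a) set \<Rightarrow> (('a \<Rightarrow> 'a) \<times> 'a) set" where
  "invariants k h S = {m \<in> S. \<forall>\<sigma>\<in>Gal k. gact h \<sigma> m = m}"

text \<open>Affine points of X(kbar) outside Omega: y^p = c h(x), y \<noteq> 0. These are exactly the
  points allowed in the support of a good divisor.\<close>
definition good_points :: "nat \<Rightarrow> 'a::field \<Rightarrow> 'a poly \<Rightarrow> ('a \<times> 'a) set" where
  "good_points p c h = {(x0, y0). y0 ^ p = c * poly h x0 \<and> y0 \<noteq> 0}"

definition good_divisor :: "nat \<Rightarrow> 'a::field \<Rightarrow> 'a poly \<Rightarrow> ('a \<times> 'a \<Rightarrow> int) \<Rightarrow> bool" where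
  "good_divisor p c h D \<longleftrightarrow> finite {P. D P \<noteq> 0} \<and> {P. D P \<noteq> 0} \<subseteq> good_points p c h"

definition div_degree :: "('a \<times> 'a \<Rightarrow> int) \<Rightarrow> int" where
  "div_degree D = (\<Sum>P\<in>{P. D P \<noteq> 0}. D P)"

definition fdiv :: "'a::field poly \<Rightarrow> ('a \<times> 'a \<Rightarrow> int) \<Rightarrow> ('a \<Rightarrow> 'a) \<times> 'a" where
  "fdiv h D = ((\<lambda>\<omega>. if \<omega> \<in> Rts h then (\<Prod>P\<in>{P. D P \<noteq> 0}. (fst P - \<omega>) powi D P) else 1),
               (\<Prod>P\<in>{P. D P \<noteq> 0}. snd P powi D P))"

end

theory Submission
  imports Defs
begin

text \<open>
  Both sides are the Galois invariants of the set of \<open>(\<alpha>, s) \<in> Mbar\<^sup>\<times>\<close> with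
  \<open>c\<^sup>r N(\<alpha>) = s\<^sup>p\<close>. Indeed \<open>f(D)\<close> lies in this set, because on the curve
  \<open>N(x\<^sub>0 - x(\<omega>)) = h(x\<^sub>0) = y\<^sub>0\<^sup>p / c\<close>, and the set is a single coset of \<open>\<partial>(Lbar\<^sup>\<times>)\<close>:
  given \<open>(\<alpha>, s)\<close> in it, \<open>p\<close>-th roots of \<open>\<alpha> / f(D)\<close> exist in the separable closure and
  have the right norm up to a \<open>p\<close>-th root of unity, which is absorbed at a root of \<open>h\<close> of
  multiplicity prime to \<open>p\<close> (one exists since \<open>h\<close> is not a \<open>p\<close>-th power over \<open>k\<close>).
  Galois invariant elements of \<open>Lbar\<close> and \<open>kbar\<close> come from \<open>L\<close> and \<open>k\<close>: the fixed field of
  \<open>G\<^sub>k\<close> is \<open>k\<close>, as embeddings extend along simple extensions and, by Zorn's lemma, to all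
  of \<open>kbar\<close>; and invariant functions on \<open>\<Omega>\<close> are interpolated by polynomials over \<open>k\<close>.
\<close>

section \<open>Subfields and polynomials over them\<close>

lemma subfield_zero: "is_subfield E \<Longrightarrow> 0 \<in> E"
  and subfield_one: "is_subfield E \<Longrightarrow> 1 \<in> E"
  and subfield_add: "is_subfield E \<Longrightarrow> x \<in> E \<Longrightarrow> y \<in> E \<Longrightarrow> x + y \<in> E"
  and subfield_mult: "is_subfield E \<Longrightarrow> x \<in> E \<Longrightarrow> y \<in> E \<Longrightarrow> x * y \<in> E"
  and subfield_uminus: "is_subfield E \<Longrightarrow> x \<in> E \<Longrightarrow> - x \<in> E"
  and subfield_inverse: "is_subfield E \<Longrightarrow> x \<in> E \<Longrightarrow> inverse x \<in> E"
  by (auto simp: is_subfield_def)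

lemma subfield_diff: "is_subfield E \<Longrightarrow> x \<in> E \<Longrightarrow> y \<in> E \<Longrightarrow> x - y \<in> E"
  by (metis diff_conv_add_uminus subfield_add subfield_uminus)

lemma subfield_divide: "is_subfield E \<Longrightarrow> x \<in> E \<Longrightarrow> y \<in> E \<Longrightarrow> x / y \<in> E"
  by (metis divide_inverse subfield_inverse subfield_mult)

lemma subfield_power: "is_subfield E \<Longrightarrow> x \<in> E \<Longrightarrow> x ^ n \<in> E"
  by (induction n) (auto intro: subfield_one subfield_mult)

lemma subfield_sum: "is_subfield E \<Longrightarrow> (\<And>i. i \<in> A \<Longrightarrow> f i \<in> E) \<Longrightarrow> sum f A \<in> E"
  by (induction A rule: infinite_finite_induct) (auto intro: subfield_zero subfield_add)

lemma poly_over_coeff: "poly_over E p \<Longrightarrow> coeff p i \<in> E"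
  by (simp add: poly_over_def)

lemma poly_over_0_iff [simp]: "poly_over E 0 \<longleftrightarrow> 0 \<in> E"
  by (simp add: poly_over_def)

lemma poly_over_pCons_iff: "poly_over E (pCons a p) \<longleftrightarrow> a \<in> E \<and> poly_over E p"
  by (auto simp: poly_over_def coeff_pCons split: nat.splits)

lemma poly_over_const: "is_subfield E \<Longrightarrow> a \<in> E \<Longrightarrow> poly_over E [:a:]"
  by (simp add: poly_over_pCons_iff subfield_zero)

lemma poly_over_X: "is_subfield E \<Longrightarrow> poly_over E [:0, 1:]"
  by (simp add: poly_over_pCons_iff subfield_zero subfield_one)

lemma poly_over_one: "is_subfield E \<Longrightarrow> poly_over E 1"
  by (simp add: poly_over_def coeff_1 subfield_zero subfield_one)

lemma poly_over_add: "is_subfield E \<Longrightarrow> poly_over E p \<Longrightarrow> poly_over E q \<Longrightarrow> poly_over E (p + q)"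
  and poly_over_diff: "is_subfield E \<Longrightarrow> poly_over E p \<Longrightarrow> poly_over E q \<Longrightarrow> poly_over E (p - q)"
  and poly_over_uminus: "is_subfield E \<Longrightarrow> poly_over E p \<Longrightarrow> poly_over E (- p)"
  and poly_over_smult: "is_subfield E \<Longrightarrow> a \<in> E \<Longrightarrow> poly_over E p \<Longrightarrow> poly_over E (smult a p)"
  by (simp_all add: poly_over_def subfield_add subfield_diff subfield_uminus subfield_mult)

lemma poly_over_mult: "is_subfield E \<Longrightarrow> poly_over E p \<Longrightarrow> poly_over E q \<Longrightarrow> poly_over E (p * q)"
  unfolding poly_over_def coeff_mult by (auto intro!: subfield_sum subfield_mult)

lemma poly_over_power: "is_subfield E \<Longrightarrow> poly_over E p \<Longrightarrow> poly_over E (p ^ n)"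
  by (induction n) (simp_all add: poly_over_one poly_over_mult)

lemma poly_over_mono: "E \<subseteq> F \<Longrightarrow> poly_over E p \<Longrightarrow> poly_over F p"
  by (auto simp: poly_over_def)

lemma poly_over_UNIV [simp]: "poly_over UNIV p"
  by (simp add: poly_over_def)

lemma poly_over_divmod:
  assumes E: "is_subfield E" and f: "poly_over E f" and q: "poly_over E q" "q \<noteq> 0"
  shows "\<exists>s r. poly_over E s \<and> poly_over E r \<and> f = s * q + r \<and> (r = 0 \<or> degree r < degree q)"
  using f
proof (induction f rule: pCons_induct)
  case 0
  then show ?case by (intro exI[of _ 0]) (auto simp: subfield_zero E)
next
  case (pCons a f0)
  from pCons.prems have a: "a \<in> E" and f0: "poly_over E f0" by (auto simp: poly_over_pCons_iff)
  from pCons.IH[OF f0] obtain s0 r0 where s0: "poly_over E s0" and r0: "poly_over E r0"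
    and eq: "f0 = s0 * q + r0" and dr: "r0 = 0 \<or> degree r0 < degree q" by blast
  define r1 where "r1 = pCons a r0"
  have r1: "poly_over E r1" using a r0 by (simp add: r1_def poly_over_pCons_iff)
  have dr1: "degree r1 \<le> degree q"
    using dr by (cases "r0 = 0") (auto simp: r1_def degree_pCons_eq_if)
  \<comment> \<open>one step of long division: cancel the coefficient of \<open>r1\<close> at \<open>degree q\<close>\<close>
  define c where "c = coeff r1 (degree q) / lead_coeff q"
  have c: "c \<in> E" using E r1 q by (simp add: c_def subfield_divide poly_over_coeff)
  define r where "r = r1 - smult c q"
  have r: "poly_over E r" unfolding r_def by (intro poly_over_diff poly_over_smult E c r1 q)
  have "coeff r (degree q) = 0" using q(2) by (simp add: r_def c_def)
  moreover have "degree r \<le> degree q"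
    unfolding r_def using dr1 by (meson degree_diff_le degree_smult_le)
  ultimately have "r = 0 \<or> degree r < degree q"
    by (metis leading_coeff_0_iff le_neq_implies_less)
  moreover have "pCons a f0 = pCons c s0 * q + r"
    unfolding eq r_def r1_def by (simp add: algebra_simps)
  moreover have "poly_over E (pCons c s0)" using c s0 by (simp add: poly_over_pCons_iff)
  ultimately show ?case using r by blast
qed

lemma poly_over_dvd_imp_quotient:
  assumes E: "is_subfield E" and f: "poly_over E f" and q: "poly_over E q" "q \<noteq> 0"
    and "q dvd f"
  shows "\<exists>e. poly_over E e \<and> f = q * e"
proof -
  obtain s r where s: "poly_over E s" and eq: "f = s * q + r"
    and dr: "r = 0 \<or> degree r < degree q" using poly_over_divmod[OF E f q] by blast
  have "q dvd r" using \<open>q dvd f\<close> eq by (metis dvd_add_right_iff dvd_triv_right)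
  then have "r = 0" using dr q(2) by (metis dvd_imp_degree_le not_le)
  then show ?thesis using eq s by (auto simp: mult.commute)
qed

lemma poly_over_bezout:
  assumes E: "is_subfield E"
  shows "poly_over E a \<Longrightarrow> poly_over E b \<Longrightarrow> \<exists>u v d. poly_over E u \<and> poly_over E v \<and>
           poly_over E d \<and> d = u * a + v * b \<and> d dvd a \<and> d dvd b"
proof (induction "if b = 0 then 0 else Suc (degree b)" arbitrary: a b rule: less_induct)
  case less
  show ?case
  proof (cases "b = 0")
    case True
    then show ?thesis using less.prems E
      by (intro exI[of _ 1] exI[of _ 0] exI[of _ a]) (auto simp: poly_over_one subfield_zero)
  next
    case False
    obtain s r where s: "poly_over E s" and r: "poly_over E r" and eq: "a = s * b + r"
      and dr: "r = 0 \<or> degree r < degree b" using poly_over_divmod[OF E less.prems False] by blast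
    have "(if r = 0 then 0 else Suc (degree r)) < (if b = 0 then 0 else Suc (degree b))"
      using dr False by auto
    from less.hyps[OF this less.prems(2) r] obtain u v d where
      uvd: "poly_over E u" "poly_over E v" "poly_over E d" "d = u * b + v * r" "d dvd b" "d dvd r"
      by blast
    have "d = v * a + (u - v * s) * b" using uvd(4) eq by (simp add: algebra_simps)
    moreover have "d dvd a" using eq uvd by auto
    moreover have "poly_over E (u - v * s)" using uvd s E by (intro poly_over_diff poly_over_mult) auto
    ultimately show ?thesis using uvd by blast
  qed
qed

section \<open>Minimal polynomials and simple extensions\<close>

definition is_minpoly :: "'a::field set \<Rightarrow> 'a \<Rightarrow> 'a poly \<Rightarrow> bool" where
  "is_minpoly E y q \<longleftrightarrow> poly_over E q \<and> q \<noteq> 0 \<and> poly q y = 0 \<and>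
     (\<forall>g. poly_over E g \<and> g \<noteq> 0 \<and> poly g y = 0 \<longrightarrow> degree q \<le> degree g)"

definition algebraic_over :: "'a::field set \<Rightarrow> 'a \<Rightarrow> bool" where
  "algebraic_over E y \<longleftrightarrow> (\<exists>g. g \<noteq> 0 \<and> poly_over E g \<and> poly g y = 0)"

definition adjoin :: "'a::field set \<Rightarrow> 'a \<Rightarrow> 'a set" where
  "adjoin E y = {poly f y | f. poly_over E f}"

lemma minpoly_exists:
  assumes "algebraic_over E y" shows "\<exists>q. is_minpoly E y q"
proof -
  let ?P = "\<lambda>n. \<exists>g. g \<noteq> 0 \<and> poly_over E g \<and> poly g y = 0 \<and> degree g = n"
  from assms obtain g where "g \<noteq> 0 \<and> poly_over E g \<and> poly g y = 0"
    unfolding algebraic_over_def by blast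
  then have "?P (degree g)" by blast
  then obtain n where n: "?P n" and least: "\<And>m. ?P m \<Longrightarrow> n \<le> m"
    using ex_has_least_nat[of ?P "degree g" id] by auto
  from n obtain q where "q \<noteq> 0 \<and> poly_over E q \<and> poly q y = 0 \<and> degree q = n" by blast
  then have "is_minpoly E y q" unfolding is_minpoly_def using least by blast
  then show ?thesis by blast
qed

lemma minpoly_dvd:
  assumes E: "is_subfield E" and m: "is_minpoly E y q" and f: "poly_over E f" and "poly f y = 0"
  shows "\<exists>e. poly_over E e \<and> f = q * e"
proof -
  have q: "poly_over E q" "q \<noteq> 0" "poly q y = 0" using m by (auto simp: is_minpoly_def)
  obtain s r where s: "poly_over E s" and r: "poly_over E r" and eq: "f = s * q + r"
    and dr: "r = 0 \<or> degree r < degree q" using poly_over_divmod[OF E f q(1,2)] by blast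
  have "poly r y = 0" using \<open>poly f y = 0\<close> q(3) eq by simp
  then have "r = 0" using dr m r unfolding is_minpoly_def by (meson not_le)
  then show ?thesis using eq s by (auto simp: mult.commute)
qed

lemma minpoly_degree_pos: "is_minpoly E y q \<Longrightarrow> degree q > 0"
  unfolding is_minpoly_def
  by (metis degree0_coeffs gr0I poly_pCons poly_0 mult_zero_right add.right_neutral pCons_0_0)

lemma minpoly_irreducible:
  assumes m: "is_minpoly E y q" and a: "poly_over E a" and b: "poly_over E b" and eq: "q = a * b"
  shows "degree a = 0 \<or> degree b = 0"
proof -
  have q0: "q \<noteq> 0" and qy: "poly q y = 0" using m by (auto simp: is_minpoly_def)
  have "a \<noteq> 0" "b \<noteq> 0" using q0 eq by auto
  then have dq: "degree q = degree a + degree b" using eq by (simp add: degree_mult_eq)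
  have "poly a y = 0 \<or> poly b y = 0" using qy eq by simp
  then have "degree q \<le> degree a \<or> degree q \<le> degree b"
    using m a b \<open>a \<noteq> 0\<close> \<open>b \<noteq> 0\<close> unfolding is_minpoly_def by blast
  then show ?thesis using dq by linarith
qed

lemma adjoin_inverse:
  assumes E: "is_subfield E" and m: "is_minpoly E y q" and f: "poly_over E f"
    and fy: "poly f y \<noteq> 0"
  shows "\<exists>g. poly_over E g \<and> poly g y * poly f y = 1"
proof -
  have q: "poly_over E q" "q \<noteq> 0" "poly q y = 0" using m by (auto simp: is_minpoly_def)
  obtain u v d where uvd: "poly_over E u" "poly_over E d" "d = u * f + v * q"
      "d dvd f" "d dvd q" using poly_over_bezout[OF E f q(1)] by blast
  have dy: "poly d y = poly u y * poly f y" using uvd(3) q(3) by simp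
  have "poly d y \<noteq> 0"
  proof
    assume "poly d y = 0"
    then obtain e where "d = q * e" using minpoly_dvd[OF E m uvd(2)] by blast
    then have "q dvd f" using uvd(4) by (metis dvd_mult_left)
    then show False using fy q(3) by (metis dvd_def mult_zero_left poly_mult)
  qed
  then have d0: "d \<noteq> 0" by auto
  obtain e where e: "poly_over E e" "q = d * e"
    using poly_over_dvd_imp_quotient[OF E q(1) uvd(2) d0 uvd(5)] by blast
  have "degree e \<noteq> 0"
  proof
    assume "degree e = 0"
    moreover have "poly e y = 0" using e(2) q(3) \<open>poly d y \<noteq> 0\<close> by simp
    ultimately have "e = 0"
      by (metis degree0_coeffs poly_pCons poly_0 mult_zero_right add.right_neutral pCons_0_0)
    then show False using e(2) q(2) by simp
  qed
  then have "degree d = 0" using minpoly_irreducible[OF m uvd(2) e] by simp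
  then obtain c where c: "d = [:c:]" by (metis degree_0_id)
  have "c \<in> E" using uvd(2) c by (metis coeff_pCons_0 poly_over_coeff)
  have "c \<noteq> 0" using d0 c by simp
  have "poly (smult (inverse c) u) y * poly f y = 1"
    using dy c \<open>c \<noteq> 0\<close> by (simp add: field_simps)
  moreover have "poly_over E (smult (inverse c) u)"
    using E \<open>c \<in> E\<close> uvd(1) by (simp add: poly_over_smult subfield_inverse)
  ultimately show ?thesis by blast
qed

lemma adjoin_subfield:
  assumes E: "is_subfield E" and "algebraic_over E y"
  shows "is_subfield (adjoin E y)"
proof -
  obtain q where m: "is_minpoly E y q" using minpoly_exists[OF assms(2)] by blast
  show ?thesis unfolding is_subfield_def
  proof (intro conjI ballI)
    show "0 \<in> adjoin E y" using E by (auto simp: adjoin_def subfield_zero intro!: exI[of _ 0])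
    show "1 \<in> adjoin E y" using E by (auto simp: adjoin_def poly_over_one intro!: exI[of _ 1])
  next
    fix a b assume "a \<in> adjoin E y" "b \<in> adjoin E y"
    then obtain f g where fg: "a = poly f y" "b = poly g y" "poly_over E f" "poly_over E g"
      by (auto simp: adjoin_def)
    show "a + b \<in> adjoin E y"
      using E fg by (auto simp: adjoin_def intro!: exI[of _ "f + g"] poly_over_add)
    show "a * b \<in> adjoin E y"
      using E fg by (auto simp: adjoin_def intro!: exI[of _ "f * g"] poly_over_mult)
  next
    fix a assume "a \<in> adjoin E y"
    then obtain f where f: "a = poly f y" "poly_over E f" by (auto simp: adjoin_def)
    then show "- a \<in> adjoin E y"
      using E by (auto simp: adjoin_def intro!: exI[of _ "- f"] poly_over_uminus)
    show "inverse a \<in> adjoin E y"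
    proof (cases "a = 0")
      case True then show ?thesis using E
        by (auto simp: adjoin_def subfield_zero intro!: exI[of _ 0])
    next
      case False
      then obtain g where "poly_over E g" "poly g y * a = 1"
        using adjoin_inverse[OF E m f(2)] f(1) by blast
      then show ?thesis using False by (auto simp: adjoin_def inverse_unique mult.commute)
    qed
  qed
qed

lemma base_subset_adjoin: "is_subfield E \<Longrightarrow> E \<subseteq> adjoin E y"
  unfolding adjoin_def by (auto intro!: exI[of _ "[:_:]"] poly_over_const)

lemma generator_in_adjoin: "is_subfield E \<Longrightarrow> y \<in> adjoin E y"
  unfolding adjoin_def by (auto intro!: exI[of _ "[:0, 1:]"] poly_over_X)

section \<open>Field embeddings and the fixed field of the Galois group\<close>

locale field_embedding =
  fixes F :: "'a::field set" and \<phi> :: "'a \<Rightarrow> 'a"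
  assumes subfield: "is_subfield F"
    and hom_one: "\<phi> 1 = 1"
    and hom_add: "a \<in> F \<Longrightarrow> b \<in> F \<Longrightarrow> \<phi> (a + b) = \<phi> a + \<phi> b"
    and hom_mult: "a \<in> F \<Longrightarrow> b \<in> F \<Longrightarrow> \<phi> (a * b) = \<phi> a * \<phi> b"
begin

lemma hom_zero: "\<phi> 0 = 0"
  using hom_add[of 0 0] subfield_zero[OF subfield] by (metis add_cancel_left_right)

lemma hom_uminus: "a \<in> F \<Longrightarrow> \<phi> (- a) = - \<phi> a"
  using hom_add[of a "- a"] subfield_uminus[OF subfield] hom_zero minus_unique by fastforce

lemma hom_diff: "a \<in> F \<Longrightarrow> b \<in> F \<Longrightarrow> \<phi> (a - b) = \<phi> a - \<phi> b"
  using hom_add[of a "- b"] hom_uminus[of b] subfield_uminus[OF subfield] by simp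

lemma hom_sum: "(\<And>i. i \<in> A \<Longrightarrow> f i \<in> F) \<Longrightarrow> \<phi> (sum f A) = (\<Sum>i\<in>A. \<phi> (f i))"
  by (induction A rule: infinite_finite_induct) (auto simp: hom_zero hom_add subfield_sum[OF subfield])

lemma hom_nonzero: "a \<in> F \<Longrightarrow> a \<noteq> 0 \<Longrightarrow> \<phi> a \<noteq> 0"
  using hom_mult[of a "inverse a"] subfield_inverse[OF subfield] hom_one by auto

lemma inj_on_F: "inj_on \<phi> F"
proof (rule inj_onI)
  fix x y assume "x \<in> F" "y \<in> F" "\<phi> x = \<phi> y"
  then show "x = y" using hom_nonzero[of "x - y"] subfield_diff[OF subfield] by (auto simp: hom_diff)
qed

lemma coeff_map_poly_hom: "coeff (map_poly \<phi> f) n = \<phi> (coeff f n)"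
  by (simp add: coeff_map_poly hom_zero)

lemma map_poly_hom_const: "map_poly \<phi> [:a:] = [:\<phi> a:]"
  by (simp add: map_poly_pCons hom_zero)

lemma map_poly_hom_diff:
  "poly_over F f \<Longrightarrow> poly_over F g \<Longrightarrow> map_poly \<phi> (f - g) = map_poly \<phi> f - map_poly \<phi> g"
  by (rule poly_eqI) (simp add: coeff_map_poly_hom hom_diff poly_over_coeff)

lemma map_poly_hom_add:
  "poly_over F f \<Longrightarrow> poly_over F g \<Longrightarrow> map_poly \<phi> (f + g) = map_poly \<phi> f + map_poly \<phi> g"
  by (rule poly_eqI) (simp add: coeff_map_poly_hom hom_add poly_over_coeff)

lemma map_poly_hom_mult:
  "poly_over F f \<Longrightarrow> poly_over F g \<Longrightarrow> map_poly \<phi> (f * g) = map_poly \<phi> f * map_poly \<phi> g"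
  by (rule poly_eqI)
    (simp add: coeff_map_poly_hom coeff_mult hom_sum hom_mult poly_over_coeff subfield_mult[OF subfield])

lemma map_poly_hom_power: "poly_over F f \<Longrightarrow> map_poly \<phi> (f ^ n) = map_poly \<phi> f ^ n"
  by (induction n) (simp_all add: hom_one map_poly_hom_mult poly_over_power[OF subfield])

lemma degree_map_poly_hom: "poly_over F f \<Longrightarrow> degree (map_poly \<phi> f) = degree f"
proof (cases "f = 0")
  case False
  assume f: "poly_over F f"
  have "degree (map_poly \<phi> f) \<le> degree f"
    by (rule degree_le) (simp add: coeff_map_poly_hom coeff_eq_0 hom_zero)
  moreover have "\<phi> (lead_coeff f) \<noteq> 0" using hom_nonzero poly_over_coeff[OF f] False by auto
  then have "degree f \<le> degree (map_poly \<phi> f)" by (simp add: le_degree coeff_map_poly_hom)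
  ultimately show ?thesis by simp
qed simp

lemma lead_coeff_map_poly_hom: "poly_over F f \<Longrightarrow> lead_coeff (map_poly \<phi> f) = \<phi> (lead_coeff f)"
  by (simp add: coeff_map_poly_hom degree_map_poly_hom)

lemma hom_poly: "poly_over F f \<Longrightarrow> z \<in> F \<Longrightarrow> \<phi> (poly f z) = poly (map_poly \<phi> f) (\<phi> z)"
proof (induction f rule: pCons_induct)
  case (pCons a p)
  have a: "a \<in> F" and p: "poly_over F p" using pCons.prems by (auto simp: poly_over_pCons_iff)
  have "poly p z \<in> F" using p pCons.prems(2) subfield
    by (simp add: poly_altdef subfield_sum subfield_mult subfield_power poly_over_coeff)
  then show ?case using pCons.IH[OF p pCons.prems(2)] a pCons.prems(2)
    by (simp add: map_poly_pCons hom_zero hom_add hom_mult subfield_mult[OF subfield])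
qed (simp add: hom_zero)

lemma map_poly_hom_fixed: "poly_over E f \<Longrightarrow> (\<And>z. z \<in> E \<Longrightarrow> \<phi> z = z) \<Longrightarrow> map_poly \<phi> f = f"
  by (rule poly_eqI) (simp add: coeff_map_poly_hom poly_over_coeff)

end

lemma field_embedding_extend_adjoin:
  assumes em: "field_embedding F \<phi>" and m: "is_minpoly F y q"
    and y': "poly (map_poly \<phi> q) y' = 0"
  shows "\<exists>\<psi>. field_embedding (adjoin F y) \<psi> \<and> (\<forall>z\<in>F. \<psi> z = \<phi> z) \<and> \<psi> y = y'"
proof -
  interpret field_embedding F \<phi> by (fact em)
  have q: "poly_over F q" using m by (simp add: is_minpoly_def)
  \<comment> \<open>\<open>\<psi> (f y) := (\<phi> f) y'\<close> is well defined because \<open>q\<close> divides every \<open>f\<close> vanishing at \<open>y\<close>\<close>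
  have well_defined: "poly (map_poly \<phi> f) y' = poly (map_poly \<phi> g) y'"
    if f: "poly_over F f" and g: "poly_over F g" and eq: "poly f y = poly g y" for f g
  proof -
    obtain e where e: "poly_over F e" "f - g = q * e"
      using minpoly_dvd[OF subfield m poly_over_diff[OF subfield f g]] eq by auto
    have "map_poly \<phi> f - map_poly \<phi> g = map_poly \<phi> q * map_poly \<phi> e"
      using map_poly_hom_diff[OF f g] map_poly_hom_mult[OF q e(1)] e(2) by simp
    then have "poly (map_poly \<phi> f) y' - poly (map_poly \<phi> g) y' = 0"
      using y' by (simp only: poly_diff[symmetric] poly_mult mult_zero_left)
    then show ?thesis by simp
  qed
  define \<psi> where "\<psi> z = poly (map_poly \<phi> (SOME f. poly_over F f \<and> poly f y = z)) y'" for z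
  have \<psi>: "\<psi> (poly f y) = poly (map_poly \<phi> f) y'" if f: "poly_over F f" for f
  proof -
    have "\<exists>g. poly_over F g \<and> poly g y = poly f y" using f by blast
    then have "poly_over F (SOME g. poly_over F g \<and> poly g y = poly f y) \<and>
        poly (SOME g. poly_over F g \<and> poly g y = poly f y) y = poly f y" by (rule someI_ex)
    then show ?thesis unfolding \<psi>_def using well_defined f by blast
  qed
  have alg: "algebraic_over F y" using m unfolding is_minpoly_def algebraic_over_def by blast
  have "field_embedding (adjoin F y) \<psi>"
  proof
    show "is_subfield (adjoin F y)" by (rule adjoin_subfield[OF subfield alg])
    show "\<psi> 1 = 1" using \<psi>[OF poly_over_one[OF subfield]] by (simp add: hom_one)
  next
    fix a b assume "a \<in> adjoin F y" "b \<in> adjoin F y"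
    then obtain f g where fg: "a = poly f y" "b = poly g y" "poly_over F f" "poly_over F g"
      by (auto simp: adjoin_def)
    show "\<psi> (a + b) = \<psi> a + \<psi> b"
      using \<psi>[OF poly_over_add[OF subfield fg(3,4)]] \<psi>[OF fg(3)] \<psi>[OF fg(4)] fg
        map_poly_hom_add[OF fg(3,4)] by simp
    show "\<psi> (a * b) = \<psi> a * \<psi> b"
      using \<psi>[OF poly_over_mult[OF subfield fg(3,4)]] \<psi>[OF fg(3)] \<psi>[OF fg(4)] fg
        map_poly_hom_mult[OF fg(3,4)] by simp
  qed
  moreover have "\<psi> z = \<phi> z" if "z \<in> F" for z
    using \<psi>[OF poly_over_const[OF subfield that]] by (simp add: map_poly_hom_const)
  moreover have "\<psi> y = y'"
    using \<psi>[OF poly_over_X[OF subfield]] by (simp add: map_poly_pCons hom_zero hom_one)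
  ultimately show ?thesis by blast
qed

lemma separable_poly_dvd:
  assumes "separable_poly g" "a dvd g" shows "separable_poly a"
proof -
  obtain e where g: "g = a * e" using assms(2) by blast
  show ?thesis unfolding separable_poly_def
  proof (rule coprimeI)
    fix c assume "c dvd a" "c dvd pderiv a"
    then have "c dvd g" "c dvd pderiv g" using g by (simp_all add: pderiv_mult)
    then show "is_unit c" using assms(1) coprime_common_divisor unfolding separable_poly_def by blast
  qed
qed

lemma separable_closure_subfield: "is_separable_closure_of k \<Longrightarrow> is_subfield k"
  and separable_closure_algebraic:
    "is_separable_closure_of k \<Longrightarrow> \<exists>g. g \<noteq> 0 \<and> poly_over k g \<and> separable_poly g \<and> poly g x = 0"
  by (simp_all add: is_separable_closure_of_def)

lemma separable_closure_root:
  fixes k :: "'a::field set" and g :: "'a poly"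
  shows "is_separable_closure_of k \<Longrightarrow> degree g > 0 \<Longrightarrow> separable_poly g \<Longrightarrow> \<exists>x. poly g x = 0"
  by (simp add: is_separable_closure_of_def)

lemma minpoly_dvd_separable:
  assumes sc: "is_separable_closure_of k" and kF: "k \<subseteq> F" and F: "is_subfield F"
    and m: "is_minpoly F y q"
  shows "\<exists>g e. poly_over k g \<and> separable_poly g \<and> poly_over F e \<and> g = q * e"
proof -
  obtain g where g: "poly_over k g" "separable_poly g" "poly g y = 0"
    using separable_closure_algebraic[OF sc, where x = y] by blast
  then obtain e where "poly_over F e" "g = q * e"
    using minpoly_dvd[OF F m poly_over_mono[OF kF g(1)]] by blast
  then show ?thesis using g by blast
qed

lemma conjugate_root_exists:
  assumes sc: "is_separable_closure_of k" and em: "field_embedding F \<phi>" and kF: "k \<subseteq> F"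
    and fix_k: "\<And>z. z \<in> k \<Longrightarrow> \<phi> z = z" and m: "is_minpoly F y q"
  shows "\<exists>y'. poly (map_poly \<phi> q) y' = 0"
proof -
  interpret field_embedding F \<phi> by (fact em)
  have q: "poly_over F q" using m by (simp add: is_minpoly_def)
  obtain g e where g: "poly_over k g" "separable_poly g" and e: "poly_over F e" "g = q * e"
    using minpoly_dvd_separable[OF sc kF subfield m] by blast
  have "g = map_poly \<phi> q * map_poly \<phi> e"
    using map_poly_hom_fixed[OF g(1) fix_k] map_poly_hom_mult[OF q e(1)] e(2) by simp
  then have "separable_poly (map_poly \<phi> q)" using separable_poly_dvd[OF g(2)] by (metis dvd_triv_left)
  moreover have "degree (map_poly \<phi> q) > 0"
    using degree_map_poly_hom[OF q] minpoly_degree_pos[OF m] by simp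
  ultimately show ?thesis using separable_closure_root[OF sc] by blast
qed

lemma field_embedding_extend_adjoin_sep_closure:
  assumes sc: "is_separable_closure_of k" and em: "field_embedding F \<phi>" and kF: "k \<subseteq> F"
    and fix_k: "\<And>z. z \<in> k \<Longrightarrow> \<phi> z = z"
  shows "\<exists>\<psi>. field_embedding (adjoin F y) \<psi> \<and> (\<forall>z\<in>F. \<psi> z = \<phi> z)"
proof -
  have F: "is_subfield F" using em by (rule field_embedding.subfield)
  obtain g where "g \<noteq> 0" "poly_over k g" "poly g y = 0"
    using separable_closure_algebraic[OF sc, where x = y] by blast
  then have "algebraic_over F y" using poly_over_mono[OF kF] unfolding algebraic_over_def by blast
  then obtain q where m: "is_minpoly F y q" using minpoly_exists by blast
  obtain y' where "poly (map_poly \<phi> q) y' = 0" using conjugate_root_exists[OF sc em kF fix_k m] ..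
  from field_embedding_extend_adjoin[OF em m this] show ?thesis by blast
qed

definition graph_on :: "'a set \<Rightarrow> ('a \<Rightarrow> 'b) \<Rightarrow> ('a \<times> 'b) set" where
  "graph_on F \<phi> = (\<lambda>z. (z, \<phi> z)) ` F"

lemma mem_graph_on_iff: "(z, w) \<in> graph_on F \<phi> \<longleftrightarrow> z \<in> F \<and> w = \<phi> z"
  by (auto simp: graph_on_def)

lemma graph_on_subset_iff: "graph_on F \<phi> \<subseteq> graph_on F' \<phi>' \<longleftrightarrow> F \<subseteq> F' \<and> (\<forall>z\<in>F. \<phi> z = \<phi>' z)"
  by (auto simp: graph_on_def)

lemma single_valued_eq_graph_on:
  assumes single: "\<And>z w w'. (z, w) \<in> U \<Longrightarrow> (z, w') \<in> U \<Longrightarrow> w = w'"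
  shows "U = graph_on (fst ` U) (\<lambda>z. SOME w. (z, w) \<in> U)"
proof (intro set_eqI)
  fix P :: "'a \<times> 'b"
  obtain z w where P: "P = (z, w)" by (cases P)
  have "(z, w) \<in> U \<longleftrightarrow> z \<in> fst ` U \<and> w = (SOME w. (z, w) \<in> U)"
  proof
    assume zw: "(z, w) \<in> U"
    then have "(z, SOME w. (z, w) \<in> U) \<in> U" by (rule someI)
    then have "w = (SOME w. (z, w) \<in> U)" using single zw by blast
    moreover have "z \<in> fst ` U" using zw by (metis fst_conv image_eqI)
    ultimately show "z \<in> fst ` U \<and> w = (SOME w. (z, w) \<in> U)" by blast
  next
    assume zw: "z \<in> fst ` U \<and> w = (SOME w. (z, w) \<in> U)"
    then obtain w' where "(z, w') \<in> U" by force
    then show "(z, w) \<in> U" unfolding zw[THEN conjunct2] by (rule someI)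
  qed
  then show "P \<in> U \<longleftrightarrow> P \<in> graph_on (fst ` U) (\<lambda>z. SOME w. (z, w) \<in> U)"
    by (simp add: P mem_graph_on_iff)
qed

lemma field_embedding_locally:
  assumes one: "1 \<in> F"
    and local: "\<And>a b. a \<in> F \<Longrightarrow> b \<in> F \<Longrightarrow>
      \<exists>E \<psi>. E \<subseteq> F \<and> (\<forall>z\<in>E. \<phi> z = \<psi> z) \<and> field_embedding E \<psi> \<and> a \<in> E \<and> b \<in> E"
  shows "field_embedding F \<phi>"
proof
  from local[OF one one] obtain E \<psi>
    where E: "E \<subseteq> F" "\<forall>z\<in>E. \<phi> z = \<psi> z" "field_embedding E \<psi>" "1 \<in> E" by blast
  then show "\<phi> 1 = 1" using field_embedding.hom_one[OF E(3)] by simp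
  show "is_subfield F" unfolding is_subfield_def
  proof (intro conjI ballI)
    show "1 \<in> F" by (fact one)
    show "0 \<in> F" using E subfield_zero[OF field_embedding.subfield] by blast
  next
    fix a b assume "a \<in> F" "b \<in> F"
    from local[OF this] obtain E \<psi>
      where E: "E \<subseteq> F" "\<forall>z\<in>E. \<phi> z = \<psi> z" "field_embedding E \<psi>" "a \<in> E" "b \<in> E" by blast
    have "a + b \<in> E" "a * b \<in> E"
      using subfield_add[OF field_embedding.subfield[OF E(3)] E(4,5)]
        subfield_mult[OF field_embedding.subfield[OF E(3)] E(4,5)] by simp_all
    then show "a + b \<in> F" "a * b \<in> F" using E(1) by auto
  next
    fix a assume "a \<in> F"
    from local[OF this this] obtain E \<psi>
      where E: "E \<subseteq> F" "\<forall>z\<in>E. \<phi> z = \<psi> z" "field_embedding E \<psi>" "a \<in> E" by blast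
    have "- a \<in> E" "inverse a \<in> E"
      using subfield_uminus[OF field_embedding.subfield[OF E(3)] E(4)]
        subfield_inverse[OF field_embedding.subfield[OF E(3)] E(4)] by simp_all
    then show "- a \<in> F" "inverse a \<in> F" using E(1) by auto
  qed
next
  fix a b assume "a \<in> F" "b \<in> F"
  from local[OF this] obtain E \<psi>
    where E: "E \<subseteq> F" "\<forall>z\<in>E. \<phi> z = \<psi> z" "field_embedding E \<psi>" "a \<in> E" "b \<in> E" by blast
  interpret E: field_embedding E \<psi> by (fact E(3))
  have "a + b \<in> E" "a * b \<in> E"
    using subfield_add[OF E.subfield E(4,5)] subfield_mult[OF E.subfield E(4,5)] by simp_all
  then show "\<phi> (a + b) = \<phi> a + \<phi> b" "\<phi> (a * b) = \<phi> a * \<phi> b"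
    using E(2,4,5) E.hom_add E.hom_mult by simp_all
qed

lemma chain_Union_field_embedding_graph:
  assumes "C \<noteq> {}" and chain: "subset.chain {graph_on F \<phi> | F \<phi>. field_embedding F \<phi>} C"
  shows "\<exists>F \<phi>. \<Union>C = graph_on F \<phi> \<and> field_embedding F \<phi>"
proof -
  have graph: "\<exists>F' \<phi>'. X = graph_on F' \<phi>' \<and> field_embedding F' \<phi>'" if "X \<in> C" for X
    using that chain by (auto simp: subset_chain_def)
  have common: "\<exists>F' \<phi>'. graph_on F' \<phi>' \<in> C \<and> field_embedding F' \<phi>' \<and> P \<in> graph_on F' \<phi>' \<and> Q \<in> graph_on F' \<phi>'"
    if "P \<in> \<Union>C" "Q \<in> \<Union>C" for P Q
  proof -
    from that obtain X Y where XY: "X \<in> C" "Y \<in> C" "P \<in> X" "Q \<in> Y" by blast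
    moreover have "X \<subseteq> Y \<or> Y \<subseteq> X" using XY(1,2) chain by (auto simp: subset_chain_def)
    ultimately obtain Z where "Z \<in> C" "P \<in> Z" "Q \<in> Z" by blast
    then show ?thesis using graph by blast
  qed
  define F where "F = fst ` \<Union>C"
  define \<phi> where "\<phi> = (\<lambda>z. SOME w. (z, w) \<in> \<Union>C)"
  have "w = w'" if "(z, w) \<in> \<Union>C" "(z, w') \<in> \<Union>C" for z w w'
    using common[OF that] by (auto simp: mem_graph_on_iff)
  then have U: "\<Union>C = graph_on F \<phi>" unfolding F_def \<phi>_def by (rule single_valued_eq_graph_on)
  have "field_embedding F \<phi>"
  proof (rule field_embedding_locally)
    obtain X where "X \<in> C" using \<open>C \<noteq> {}\<close> by blast
    then obtain E \<psi> where "X = graph_on E \<psi>" "field_embedding E \<psi>" using graph by blast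
    moreover have "X \<subseteq> graph_on F \<phi>" using \<open>X \<in> C\<close> U by blast
    ultimately show "1 \<in> F" using subfield_one[OF field_embedding.subfield] by (auto simp: graph_on_subset_iff)
  next
    fix a b assume "a \<in> F" "b \<in> F"
    then have "(a, \<phi> a) \<in> \<Union>C" "(b, \<phi> b) \<in> \<Union>C" by (simp_all add: U mem_graph_on_iff)
    from common[OF this] obtain E \<psi> where E: "graph_on E \<psi> \<in> C" "field_embedding E \<psi>"
      "(a, \<phi> a) \<in> graph_on E \<psi>" "(b, \<phi> b) \<in> graph_on E \<psi>" by blast
    have "graph_on E \<psi> \<subseteq> graph_on F \<phi>" using E(1) U by blast
    then have "E \<subseteq> F" "\<forall>z\<in>E. \<phi> z = \<psi> z" by (auto simp: graph_on_subset_iff)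
    then show "\<exists>E \<psi>. E \<subseteq> F \<and> (\<forall>z\<in>E. \<phi> z = \<psi> z) \<and> field_embedding E \<psi> \<and> a \<in> E \<and> b \<in> E"
      using E by (auto simp: mem_graph_on_iff)
  qed
  with U show ?thesis by blast
qed

lemma exists_maximal_field_embedding_extension:
  assumes "field_embedding F0 \<phi>0"
  obtains F \<phi> where "field_embedding F \<phi>" "graph_on F0 \<phi>0 \<subseteq> graph_on F \<phi>"
    "\<And>F' \<phi>'. field_embedding F' \<phi>' \<Longrightarrow> graph_on F \<phi> \<subseteq> graph_on F' \<phi>' \<Longrightarrow> F' \<subseteq> F"
proof -
  define A where "A = {graph_on F \<phi> | F \<phi>. field_embedding F \<phi> \<and> graph_on F0 \<phi>0 \<subseteq> graph_on F \<phi>}"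
  have "\<exists>U\<in>A. \<forall>X\<in>C. X \<subseteq> U" if C: "subset.chain A C" for C
  proof (cases "C = {}")
    case True
    have "graph_on F0 \<phi>0 \<in> A" using assms unfolding A_def by blast
    then show ?thesis using True by blast
  next
    case False
    have "A \<subseteq> {graph_on F \<phi> | F \<phi>. field_embedding F \<phi>}" unfolding A_def by auto
    then have "subset.chain {graph_on F \<phi> | F \<phi>. field_embedding F \<phi>} C"
      using C unfolding subset_chain_def by (blast intro: subset_trans)
    from chain_Union_field_embedding_graph[OF False this]
    obtain F \<phi> where F: "\<Union>C = graph_on F \<phi>" "field_embedding F \<phi>" by blast
    obtain X where "X \<in> C" using False by blast
    then have "graph_on F0 \<phi>0 \<subseteq> X" "X \<subseteq> \<Union>C" using C by (auto simp: subset_chain_def A_def)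
    then have "\<Union>C \<in> A" using F unfolding A_def by blast
    then show ?thesis by blast
  qed
  then have "\<exists>M\<in>A. \<forall>X\<in>A. M \<subseteq> X \<longrightarrow> X = M" by (rule subset_Zorn)
  then obtain M where "M \<in> A" and max: "\<And>X. X \<in> A \<Longrightarrow> M \<subseteq> X \<Longrightarrow> X = M" by blast
  then obtain F \<phi> where M: "M = graph_on F \<phi>" and em: "field_embedding F \<phi>"
    and F0F: "graph_on F0 \<phi>0 \<subseteq> graph_on F \<phi>" unfolding A_def by blast
  have "F' \<subseteq> F" if "field_embedding F' \<phi>'" "graph_on F \<phi> \<subseteq> graph_on F' \<phi>'" for F' \<phi>'
  proof -
    have "graph_on F' \<phi>' \<in> A" using that F0F unfolding A_def by blast
    then have "graph_on F' \<phi>' \<subseteq> graph_on F \<phi>" using max M that(2) by blast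
    then show ?thesis by (simp add: graph_on_subset_iff)
  qed
  with em F0F show thesis using that by blast
qed

lemma field_embedding_extend_UNIV:
  assumes sc: "is_separable_closure_of k" and em0: "field_embedding F0 \<phi>0" and kF0: "k \<subseteq> F0"
    and fix_k: "\<And>z. z \<in> k \<Longrightarrow> \<phi>0 z = z"
  shows "\<exists>\<tau>. field_embedding UNIV \<tau> \<and> (\<forall>z\<in>F0. \<tau> z = \<phi>0 z)"
proof -
  obtain F \<phi> where em: "field_embedding F \<phi>" and F0F: "graph_on F0 \<phi>0 \<subseteq> graph_on F \<phi>"
    and max: "\<And>F' \<phi>'. field_embedding F' \<phi>' \<Longrightarrow> graph_on F \<phi> \<subseteq> graph_on F' \<phi>' \<Longrightarrow> F' \<subseteq> F"
    using exists_maximal_field_embedding_extension[OF em0] by blast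
  have F: "is_subfield F" using em by (rule field_embedding.subfield)
  have agree: "\<phi> z = \<phi>0 z" if "z \<in> F0" for z
    using F0F that by (simp add: graph_on_subset_iff)
  have kF: "k \<subseteq> F" using F0F kF0 unfolding graph_on_subset_iff by (meson subset_trans)
  have fix_F: "\<phi> z = z" if "z \<in> k" for z using that kF0 by (auto simp: agree fix_k)
  have "y \<in> F" for y
  proof -
    obtain \<psi> where \<psi>: "field_embedding (adjoin F y) \<psi>" "\<forall>z\<in>F. \<psi> z = \<phi> z"
      using field_embedding_extend_adjoin_sep_closure[OF sc em kF fix_F] by blast
    have "graph_on F \<phi> \<subseteq> graph_on (adjoin F y) \<psi>"
      unfolding graph_on_subset_iff using \<psi>(2) base_subset_adjoin[OF F] by simp
    then have "adjoin F y \<subseteq> F" using max \<psi>(1) by blast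
    then show ?thesis using generator_in_adjoin[OF F] by blast
  qed
  then have "F = UNIV" by blast
  then show ?thesis using em agree by blast
qed

lemma field_embedding_UNIV_in_Gal:
  assumes sc: "is_separable_closure_of k" and em: "field_embedding UNIV \<tau>"
    and fix_k: "\<And>z. z \<in> k \<Longrightarrow> \<tau> z = z"
  shows "\<tau> \<in> Gal k"
proof -
  interpret field_embedding UNIV \<tau> by (fact em)
  \<comment> \<open>\<open>\<tau>\<close> permutes the finitely many roots of any polynomial over \<open>k\<close>, hence is surjective\<close>
  have "z \<in> range \<tau>" for z
  proof -
    obtain g where g: "g \<noteq> 0" "poly_over k g" "poly g z = 0"
      using separable_closure_algebraic[OF sc, where x = z] by blast
    let ?S = "{w. poly g w = 0}"
    have "poly g (\<tau> w) = \<tau> (poly g w)" for w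
      using hom_poly[of g w] map_poly_hom_fixed[OF g(2) fix_k] by simp
    then have "\<tau> ` ?S \<subseteq> ?S" using hom_zero by auto
    then have "\<tau> ` ?S = ?S"
      using endo_inj_surj[OF poly_roots_finite[OF g(1)]] inj_on_subset[OF inj_on_F] by simp
    then show ?thesis using g(3) by blast
  qed
  then have "surj \<tau>" by blast
  then have "bij \<tau>" using inj_on_F by (simp add: bij_def)
  then show ?thesis unfolding Gal_def using hom_add hom_mult fix_k by simp
qed

lemma minpoly_other_root:
  assumes sc: "is_separable_closure_of k" and x: "x \<notin> k" and m: "is_minpoly k x q"
  shows "\<exists>x'. poly q x' = 0 \<and> x' \<noteq> x"
proof -
  have ks: "is_subfield k" using sc by (rule separable_closure_subfield)
  have q: "poly_over k q" "q \<noteq> 0" "poly q x = 0" using m unfolding is_minpoly_def by blast+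
  obtain g e where "separable_poly g" "g = q * e"
    using minpoly_dvd_separable[OF sc subset_refl ks m] by blast
  then have qs: "separable_poly q" using separable_poly_dvd dvd_triv_left by metis
  obtain e where qe: "q = [:-x, 1:] * e" using q(3) by (auto simp: poly_eq_0_iff_dvd)
  have "degree q \<noteq> 1"
  proof
    assume "degree q = 1"
    then have "coeff q 0 + coeff q 1 * x = 0" "coeff q 1 \<noteq> 0"
      using q(2,3) by (auto simp: poly_altdef) (metis leading_coeff_0_iff)
    then have "x = - coeff q 0 / coeff q 1" by (simp add: field_simps add_eq_0_iff2)
    then show False using x ks q(1) by (simp add: subfield_divide subfield_uminus poly_over_coeff)
  qed
  moreover have "degree q = degree [:-x, 1:] + degree e"
    using qe q(2) by (metis degree_mult_eq mult_zero_right pCons_eq_0_iff zero_neq_one)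
  ultimately have "degree e > 0" using minpoly_degree_pos[OF m] by simp
  moreover have "separable_poly e" using separable_poly_dvd[OF qs] qe by (metis dvd_triv_right)
  ultimately obtain x' where x': "poly e x' = 0" using separable_closure_root[OF sc] by blast
  have "x' \<noteq> x"
  proof
    \<comment> \<open>otherwise \<open>x\<close> would be a double root of the separable \<open>q\<close>\<close>
    assume "x' = x"
    then have "[:-x, 1:] dvd e" using x' by (simp add: poly_eq_0_iff_dvd)
    moreover have "pderiv [:-x, 1:] = 1" by (simp add: pderiv_pCons)
    then have "pderiv q = [:-x, 1:] * pderiv e + e" unfolding qe pderiv_mult by simp
    ultimately have "[:-x, 1:] dvd pderiv q" by (metis dvd_add dvd_triv_left)
    then have "is_unit [:-x, 1:]" using qs qe coprime_common_divisor dvd_triv_left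
      unfolding separable_poly_def by metis
    then show False by (simp add: is_unit_pCons_iff)
  qed
  then show ?thesis using x' qe by auto
qed

lemma Gal_moves_nonbase:
  assumes sc: "is_separable_closure_of k" and "x \<notin> k"
  shows "\<exists>\<sigma>\<in>Gal k. \<sigma> x \<noteq> x"
proof -
  have ks: "is_subfield k" using sc by (rule separable_closure_subfield)
  have id: "field_embedding k id" using ks by unfold_locales auto
  obtain g where "g \<noteq> 0" "poly_over k g" "poly g x = 0"
    using separable_closure_algebraic[OF sc, where x = x] by blast
  then obtain q where m: "is_minpoly k x q" using minpoly_exists unfolding algebraic_over_def by blast
  obtain x' where x': "poly q x' = 0" "x' \<noteq> x" using minpoly_other_root[OF sc \<open>x \<notin> k\<close> m] by blast
  obtain \<psi> where \<psi>: "field_embedding (adjoin k x) \<psi>" "\<forall>z\<in>k. \<psi> z = z" "\<psi> x = x'"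
    using field_embedding_extend_adjoin[OF id m] x'(1) by auto
  obtain \<tau> where \<tau>: "field_embedding UNIV \<tau>" "\<forall>z\<in>adjoin k x. \<tau> z = \<psi> z"
    using field_embedding_extend_UNIV[OF sc \<psi>(1) base_subset_adjoin[OF ks]] \<psi>(2) by blast
  have "\<tau> z = z" if "z \<in> k" for z using \<tau>(2) \<psi>(2) base_subset_adjoin[OF ks, of x] that by auto
  moreover have "\<tau> x = x'" using \<tau>(2) generator_in_adjoin[OF ks] \<psi>(3) by simp
  ultimately show ?thesis using field_embedding_UNIV_in_Gal[OF sc \<tau>(1)] x'(2) by metis
qed

lemma Gal_fixed_imp_base:
  assumes "is_separable_closure_of k" and "\<And>\<sigma>. \<sigma> \<in> Gal k \<Longrightarrow> \<sigma> x = x"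
  shows "x \<in> k"
  using Gal_moves_nonbase[OF assms(1), of x] assms(2) by blast

section \<open>The Galois action on roots and descent\<close>

lemma Gal_field_embedding:
  assumes "is_subfield k" and "\<sigma> \<in> Gal k" shows "field_embedding UNIV \<sigma>"
proof
  show "is_subfield (UNIV :: 'a set)" by (simp add: is_subfield_def)
  show "\<sigma> 1 = 1" using assms by (simp add: Gal_def subfield_one)
qed (use assms(2) in \<open>simp_all add: Gal_def\<close>)

lemma Gal_fixes: "\<sigma> \<in> Gal k \<Longrightarrow> z \<in> k \<Longrightarrow> \<sigma> z = z"
  by (simp add: Gal_def)

lemma Gal_apply_inv: "\<sigma> \<in> Gal k \<Longrightarrow> \<sigma> (inv \<sigma> z) = z"
  by (simp add: Gal_def bij_def surj_f_inv_f)

lemma Gal_map_poly: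
  assumes "is_subfield k" "\<sigma> \<in> Gal k" "poly_over k g" shows "map_poly \<sigma> g = g"
  by (rule field_embedding.map_poly_hom_fixed[OF Gal_field_embedding[OF assms(1,2)] assms(3)])
    (rule Gal_fixes[OF assms(2)])

lemma Gal_poly:
  assumes k: "is_subfield k" and \<sigma>: "\<sigma> \<in> Gal k" and g: "poly_over k g"
  shows "\<sigma> (poly g z) = poly g (\<sigma> z)"
  using field_embedding.hom_poly[OF Gal_field_embedding[OF k \<sigma>], of g z] Gal_map_poly[OF assms] by simp

lemma Gal_in_Rts_iff:
  assumes k: "is_subfield k" and \<sigma>: "\<sigma> \<in> Gal k" and h: "poly_over k h"
  shows "\<sigma> z \<in> Rts h \<longleftrightarrow> z \<in> Rts h"
proof -
  interpret field_embedding UNIV \<sigma> by (rule Gal_field_embedding[OF k \<sigma>])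
  have "\<sigma> (poly h z) = 0 \<longleftrightarrow> poly h z = 0"
    using hom_zero hom_nonzero[of "poly h z"] by (cases "poly h z = 0") simp_all
  then show ?thesis by (simp add: Rts_def Gal_poly[OF k \<sigma> h])
qed

lemma Gal_inv_in_Rts_iff:
  "is_subfield k \<Longrightarrow> \<sigma> \<in> Gal k \<Longrightarrow> poly_over k h \<Longrightarrow> inv \<sigma> z \<in> Rts h \<longleftrightarrow> z \<in> Rts h"
  using Gal_in_Rts_iff[of k \<sigma> h "inv \<sigma> z"] Gal_apply_inv[of \<sigma> k z] by simp

lemma Gal_invariant_imp_poly_over:
  assumes sc: "is_separable_closure_of k" and inv: "\<And>\<sigma>. \<sigma> \<in> Gal k \<Longrightarrow> map_poly \<sigma> g = g"
  shows "poly_over k g"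
  unfolding poly_over_def
proof
  fix i
  have "\<sigma> (coeff g i) = coeff g i" if "\<sigma> \<in> Gal k" for \<sigma>
    using field_embedding.coeff_map_poly_hom[OF Gal_field_embedding[OF separable_closure_subfield[OF sc] that],
        of g i] inv[OF that] by simp
  then show "coeff g i \<in> k" by (rule Gal_fixed_imp_base[OF sc])
qed

lemma interpolation_poly_exists:
  fixes f :: "'a::field \<Rightarrow> 'a"
  assumes "finite A"
  shows "\<exists>g. (\<forall>x\<in>A. poly g x = f x) \<and> degree g < card A \<or> A = {}"
  using assms
proof (induction A rule: finite_induct)
  case (insert a A)
  show ?case
  proof (cases "A = {}")
    case True
    then show ?thesis by (intro disjI1 exI[of _ "[:f a:]"]) simp
  next
    case False
    with insert.IH obtain g where g: "\<forall>x\<in>A. poly g x = f x" "degree g < card A" by blast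
    \<comment> \<open>correct \<open>g\<close> at \<open>a\<close> by a multiple of a polynomial vanishing on \<open>A\<close>\<close>
    define P where "P = (\<Prod>w\<in>A. [:-w, 1:])"
    have Pa: "poly P a \<noteq> 0" using insert.hyps by (simp add: P_def poly_prod prod_zero_iff)
    have PA: "poly P x = 0" if "x \<in> A" for x
      using that insert.hyps(1) by (auto simp: P_def poly_prod prod_zero_iff)
    have dP: "degree P = card A" unfolding P_def by (subst degree_prod_eq_sum_degree) auto
    define g' where "g' = g + smult ((f a - poly g a) / poly P a) P"
    have "\<forall>x\<in>insert a A. poly g' x = f x" using g(1) PA Pa by (auto simp: g'_def)
    moreover have "degree g' < card (insert a A)"
      unfolding g'_def using g(2) dP insert.hyps
      by (intro le_less_trans[OF degree_add_le_max]) (auto intro: le_less_trans[OF degree_smult_le])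
    ultimately show ?thesis by blast
  qed
qed simp

lemma Gal_invariant_function_on_Rts:
  assumes sc: "is_separable_closure_of k" and h: "poly_over k h" "h \<noteq> 0"
    and inv: "\<And>\<sigma> w. \<sigma> \<in> Gal k \<Longrightarrow> w \<in> Rts h \<Longrightarrow> \<sigma> (\<alpha> (inv \<sigma> w)) = \<alpha> w"
  shows "\<exists>g. poly_over k g \<and> (\<forall>w\<in>Rts h. \<alpha> w = poly g w)"
proof (cases "Rts h = {}")
  case True
  then show ?thesis using separable_closure_subfield[OF sc] by (intro exI[of _ 0]) (simp add: subfield_zero)
next
  case False
  have ks: "is_subfield k" using sc by (rule separable_closure_subfield)
  have fin: "finite (Rts h)" using h(2) by (simp add: Rts_def poly_roots_finite)
  obtain g where g: "\<forall>w\<in>Rts h. poly g w = \<alpha> w" "degree g < card (Rts h)"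
    using interpolation_poly_exists[OF fin, of \<alpha>] False by blast
  \<comment> \<open>the interpolating polynomial is unique, hence Galois invariant\<close>
  have "map_poly \<sigma> g = g" if \<sigma>: "\<sigma> \<in> Gal k" for \<sigma>
  proof -
    interpret field_embedding UNIV \<sigma> by (rule Gal_field_embedding[OF ks \<sigma>])
    show ?thesis
    proof (rule poly_eqI_degree[of "Rts h"])
      fix w assume w: "w \<in> Rts h"
      have iw: "inv \<sigma> w \<in> Rts h" using Gal_inv_in_Rts_iff[OF ks \<sigma> h(1)] w by simp
      have "poly (map_poly \<sigma> g) w = \<sigma> (poly g (inv \<sigma> w))"
        using hom_poly[of g "inv \<sigma> w"] Gal_apply_inv[OF \<sigma>] by simp
      also have "\<dots> = \<alpha> w" using g(1) iw inv[OF \<sigma> w] by simp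
      finally show "poly (map_poly \<sigma> g) w = poly g w" using g(1) w by simp
    next
      show "degree (map_poly \<sigma> g) < card (Rts h)" "degree g < card (Rts h)"
        using degree_map_poly_hom[of g] g(2) by simp_all
    qed
  qed
  then have "poly_over k g" by (rule Gal_invariant_imp_poly_over[OF sc])
  then show ?thesis using g(1) by auto
qed

section \<open>Roots of \<open>h\<close>\<close>

lemma prod_root_powers_dvd:
  fixes h :: "'a::field poly"
  assumes "h \<noteq> 0" "finite A"
  shows "(\<Prod>w\<in>A. [:-w, 1:] ^ order w h) dvd h"
  using assms(2)
proof (induction A rule: finite_induct)
  case (insert a A)
  let ?P = "\<Prod>w\<in>A. [:-w, 1:] ^ order w h"
  obtain q where q: "h = ?P * q" using insert.IH by blast
  have "poly ?P a \<noteq> 0" using insert.hyps by (simp add: poly_prod prod_zero_iff)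
  then have "order a ?P = 0" by (rule order_0I)
  then have "order a h = order a q" using q order_mult[of ?P q a] assms(1) by simp
  then have "[:-a, 1:] ^ order a h dvd q" by (simp add: order_1)
  then obtain q' where "q = [:-a, 1:] ^ order a h * q'" by blast
  then have "h = (\<Prod>w\<in>insert a A. [:-w, 1:] ^ order w h) * q'"
    using q insert.hyps by (simp add: algebra_simps)
  then show ?case by (metis dvd_triv_left)
qed simp

lemma monic_split_eq_prod:
  fixes h :: "'a::field poly"
  assumes h0: "h \<noteq> 0" and mon: "lead_coeff h = 1"
    and split: "(\<Sum>w\<in>Rts h. order w h) = degree h"
  shows "h = (\<Prod>w\<in>Rts h. [:-w, 1:] ^ order w h)"
proof -
  have fin: "finite (Rts h)" using h0 by (simp add: Rts_def poly_roots_finite)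
  let ?P = "\<Prod>w\<in>Rts h. [:-w, 1:] ^ order w h"
  obtain q where q: "h = ?P * q" using prod_root_powers_dvd[OF h0 fin] by blast
  have P0: "?P \<noteq> 0" by (simp add: prod_zero_iff fin)
  have q0: "q \<noteq> 0" using q h0 by auto
  have "degree ?P = (\<Sum>w\<in>Rts h. order w h)"
    by (subst degree_prod_eq_sum_degree) (auto simp: degree_power_eq)
  then have "degree q = 0" using degree_mult_eq[OF P0 q0] q split by simp
  moreover have "lead_coeff ?P = 1" by (simp add: lead_coeff_prod lead_coeff_power)
  then have "lead_coeff q = 1" using mon q by (metis lead_coeff_mult mult_1)
  ultimately have "q = 1" by (metis degree0_coeffs lead_coeff_pCons(2) one_pCons pCons_0_0 coeff_pCons_0)
  then show ?thesis using q by simp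
qed

lemma separable_closure_pth_root:
  fixes a :: "'a::field"
  assumes sc: "is_separable_closure_of (k :: 'a set)" and p: "p > 0" and pc: "of_nat p \<noteq> (0::'a)"
    and "a \<noteq> 0"
  shows "\<exists>b. b ^ p = a"
proof -
  let ?g = "monom (1::'a) p - [:a:]"
  have g: "?g = monom 1 p + [:-a:]" by (rule poly_eqI) (simp add: coeff_pCons split: nat.splits)
  have dg: "degree ?g = p" unfolding g using p by (subst degree_add_eq_left) (simp_all add: degree_monom_eq)
  \<comment> \<open>\<open>X g' - p g\<close> is the nonzero constant \<open>p a\<close>, so \<open>g\<close> is separable\<close>
  have "[:0, 1:] * monom (of_nat p) (p - 1) = monom (of_nat p :: 'a) p"
    using p by (simp add: monom_altdef power_Suc[symmetric] del: power_Suc)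
  then have key: "[:0, 1:] * pderiv ?g - smult (of_nat p) ?g = [:of_nat p * a:]"
    by (simp add: pderiv_diff pderiv_monom smult_monom smult_diff_right)
  have "separable_poly ?g" unfolding separable_poly_def
  proof (rule coprimeI)
    fix c assume c: "c dvd ?g" "c dvd pderiv ?g"
    have "c dvd [:0, 1:] * pderiv ?g - smult (of_nat p) ?g"
      by (rule dvd_diff[OF dvd_mult[OF c(2)] dvd_smult[OF c(1)]])
    then have "c dvd [:of_nat p * a:]" by (simp only: key)
    moreover have "is_unit [:of_nat p * a:]"
      using pc \<open>a \<noteq> 0\<close> by (simp add: is_unit_const_poly_iff dvd_field_iff)
    ultimately show "is_unit c" by (rule dvd_unit_imp_unit)
  qed
  then obtain b where "poly ?g b = 0" using separable_closure_root[OF sc, of ?g] dg p by auto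
  then show ?thesis by (auto simp: poly_monom)
qed

lemma monic_power_eq_imp_eq:
  fixes a b :: "'a::field poly"
  assumes eq: "a ^ p = b ^ p" and la: "lead_coeff a = 1" and lb: "lead_coeff b = 1"
    and p: "p > 0" and pc: "of_nat p \<noteq> (0::'a)"
  shows "a = b"
proof -
  have a0: "a \<noteq> 0" and b0: "b \<noteq> 0" using la lb by auto
  have "p * degree a = p * degree b" using eq by (metis degree_power_eq a0 b0)
  then have dab: "degree a = degree b" using p by simp
  \<comment> \<open>the cofactor of \<open>a - b\<close> in \<open>a ^ p - b ^ p\<close> has leading coefficient \<open>p\<close>\<close>
  let ?d = "(p - 1) * degree a"
  let ?t = "\<lambda>i. b ^ (p - Suc i) * a ^ i"
  have "coeff (?t i) ?d = 1" if "i < p" for i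
  proof -
    have "degree (?t i) = (p - Suc i) * degree b + i * degree a"
      using a0 b0 by (simp add: degree_mult_eq degree_power_eq)
    also have "\<dots> = ?d" using dab that by (simp add: add_mult_distrib[symmetric])
    finally have "degree (?t i) = ?d" .
    moreover have "lead_coeff (?t i) = 1" by (simp add: lead_coeff_mult lead_coeff_power la lb)
    ultimately show ?thesis by simp
  qed
  then have "coeff (\<Sum>i<p. ?t i) ?d = of_nat p" by (simp add: coeff_sum)
  then have "(\<Sum>i<p. ?t i) \<noteq> 0" using pc by auto
  moreover have "(a - b) * (\<Sum>i<p. ?t i) = 0" using eq by (simp flip: power_diff_sumr2)
  ultimately show ?thesis by simp
qed

lemma exists_root_order_not_dvd:
  fixes h :: "'a::field poly"
  assumes sc: "is_separable_closure_of k" and p: "p > 0" and pc: "of_nat p \<noteq> (0::'a)"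
    and h: "poly_over k h" "lead_coeff h = 1" "degree h > 0"
    and free: "\<forall>g. poly_over k g \<and> degree g > 0 \<longrightarrow> \<not> g ^ p dvd h"
    and split: "(\<Sum>w\<in>Rts h. order w h) = degree h"
  shows "\<exists>w\<in>Rts h. \<not> p dvd order w h"
proof (rule ccontr)
  assume "\<not> ?thesis"
  then have dvd: "\<And>w. w \<in> Rts h \<Longrightarrow> p dvd order w h" by blast
  have ks: "is_subfield k" using sc by (rule separable_closure_subfield)
  define g where "g = (\<Prod>w\<in>Rts h. [:-w, 1:] ^ (order w h div p))"
  have "g ^ p = (\<Prod>w\<in>Rts h. [:-w, 1:] ^ order w h)"
    unfolding g_def prod_power_distrib power_mult[symmetric] by (rule prod.cong) (auto simp: dvd)
  also have "\<dots> = h" using monic_split_eq_prod[OF _ h(2) split] h(3) by force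
  finally have gp: "g ^ p = h" .
  have lg: "lead_coeff g = 1" by (simp add: g_def lead_coeff_prod lead_coeff_power)
  \<comment> \<open>\<open>g\<close> is the unique monic \<open>p\<close>-th root of \<open>h\<close>, hence defined over \<open>k\<close>\<close>
  have "map_poly \<sigma> g = g" if \<sigma>: "\<sigma> \<in> Gal k" for \<sigma>
  proof (rule monic_power_eq_imp_eq[OF _ _ lg p pc])
    interpret field_embedding UNIV \<sigma> by (rule Gal_field_embedding[OF ks \<sigma>])
    show "map_poly \<sigma> g ^ p = g ^ p" using gp Gal_map_poly[OF ks \<sigma> h(1)] by (simp flip: map_poly_hom_power)
    show "lead_coeff (map_poly \<sigma> g) = 1" using lg by (simp add: lead_coeff_map_poly_hom hom_one)
  qed
  then have "poly_over k g" by (rule Gal_invariant_imp_poly_over[OF sc])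
  moreover have "degree g > 0"
  proof (rule ccontr)
    assume "\<not> degree g > 0"
    then have "degree (g ^ p) = 0" using degree_power_le[of g p] by simp
    then show False using gp h(3) by simp
  qed
  ultimately show False using free gp by auto
qed

section \<open>Norms and the cosets \<open>f(D) \<partial>(Lbar\<^sup>\<times>)\<close>\<close>

lemma power_int_prod: "(\<Prod>i\<in>A. f i) powi n = (\<Prod>i\<in>A. (f i :: 'a::field) powi n)"
  by (induction A rule: infinite_finite_induct) (auto simp: power_int_mult_distrib)

lemma prod_power_int_eq_power_int_sum:
  "(c::'a::field) \<noteq> 0 \<Longrightarrow> (\<Prod>i\<in>A. c powi g i) = c powi (\<Sum>i\<in>A. g i)"
  by (induction A rule: infinite_finite_induct) (auto simp: power_int_add)

lemma wnorm_mult_power: "wnorm h (\<lambda>w. a w * b w ^ p) = wnorm h a * wnorm h b ^ p"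
  unfolding wnorm_def
  by (simp add: power_mult_distrib prod.distrib prod_power_distrib flip: power_mult)
     (simp add: mult.commute)

lemma wnorm_nonzero: "(\<And>w. w \<in> Rts h \<Longrightarrow> a w \<noteq> (0::'a::field)) \<Longrightarrow> wnorm h a \<noteq> 0"
  unfolding wnorm_def by (cases "finite (Rts h)") (auto simp: prod_zero_iff)

text \<open>For \<open>t = c\<^sup>r\<close> its
  Galois invariants are the numerator of \<open>H\<^sup>r\<^sub>k\<close>, and it is a single coset of \<open>\<partial>(Lbar\<^sup>\<times>)\<close>.\<close>

definition norm_locus :: "'a::field poly \<Rightarrow> nat \<Rightarrow> 'a \<Rightarrow> (('a \<Rightarrow> 'a) \<times> 'a) set" where
  "norm_locus h p t = {(\<alpha>, s). \<alpha> \<in> Lbar_units h \<and> s \<noteq> 0 \<and> t * wnorm h \<alpha> = s ^ p}"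

lemma mmul_bd:
  "mmul (\<gamma>, f) (bd p h \<beta>) = ((\<lambda>w. \<gamma> w * \<beta> w ^ p), f * wnorm h \<beta>)"
  by (simp add: mmul_def bd_def)

lemma mcoset_bd_subset_norm_locus:
  assumes "m \<in> norm_locus h p t"
  shows "mcoset m (bd p h ` Lbar_units h) \<subseteq> norm_locus h p t"
proof
  fix x assume "x \<in> mcoset m (bd p h ` Lbar_units h)"
  then obtain \<beta> where \<beta>: "\<beta> \<in> Lbar_units h" and x: "x = mmul m (bd p h \<beta>)"
    by (auto simp: mcoset_def)
  obtain \<gamma> f where m: "m = (\<gamma>, f)" and \<gamma>: "\<gamma> \<in> Lbar_units h" "f \<noteq> 0" "t * wnorm h \<gamma> = f ^ p"
    using assms by (auto simp: norm_locus_def)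
  have "(\<lambda>w. \<gamma> w * \<beta> w ^ p) \<in> Lbar_units h" using \<beta> \<gamma>(1) by (simp add: Lbar_units_def)
  moreover have "f * wnorm h \<beta> \<noteq> 0"
    using \<beta> \<gamma>(2) wnorm_nonzero[of h \<beta>] by (simp add: Lbar_units_def)
  moreover have "t * wnorm h (\<lambda>w. \<gamma> w * \<beta> w ^ p) = (f * wnorm h \<beta>) ^ p"
    using \<gamma>(3) by (simp add: wnorm_mult_power power_mult_distrib)
  ultimately show "x \<in> norm_locus h p t" by (simp add: x m mmul_bd norm_locus_def)
qed

lemma pth_roots_on_Rts:
  fixes u :: "'a::field \<Rightarrow> 'a"
  assumes sc: "is_separable_closure_of (k :: 'a set)" and p: "p > 0" and pc: "of_nat p \<noteq> (0::'a)"
    and u: "\<And>w. w \<in> Rts h \<Longrightarrow> u w \<noteq> 0"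
  shows "\<exists>\<beta>\<in>Lbar_units h. \<forall>w\<in>Rts h. \<beta> w ^ p = u w"
proof -
  have "\<forall>w. \<exists>b. w \<in> Rts h \<longrightarrow> b ^ p = u w"
    using separable_closure_pth_root[OF sc p pc] u by blast
  then obtain b where b: "\<And>w. w \<in> Rts h \<Longrightarrow> b w ^ p = u w" by metis
  define \<beta> where "\<beta> w = (if w \<in> Rts h then b w else 1)" for w
  have "\<beta> w \<noteq> 0" if "w \<in> Rts h" for w
    using b[OF that] u[OF that] p by (auto simp: \<beta>_def that power_0_left)
  then have "\<beta> \<in> Lbar_units h" by (simp add: Lbar_units_def \<beta>_def)
  then show ?thesis using b by (intro bexI[of _ \<beta>]) (auto simp: \<beta>_def)
qed

lemma root_of_unity_power_surj:
  fixes \<zeta> :: "'a::comm_monoid_mult"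
  assumes "\<zeta> ^ p = 1" and "coprime e p" and "e \<noteq> 0"
  shows "\<exists>\<eta>. \<eta> ^ p = 1 \<and> \<eta> ^ e = \<zeta>"
proof -
  obtain x y where "e * x = p * y + 1" using bezout_nat[OF \<open>e \<noteq> 0\<close>, of p] assms(2) by auto
  then have "(\<zeta> ^ x) ^ e = (\<zeta> ^ p) ^ y * \<zeta>" by (simp add: power_mult[symmetric] power_add mult.commute)
  moreover have "(\<zeta> ^ x) ^ p = (\<zeta> ^ p) ^ x" by (simp add: power_mult[symmetric] mult.commute)
  ultimately have "(\<zeta> ^ x) ^ e = \<zeta>" "(\<zeta> ^ x) ^ p = 1" using assms(1) by simp_all
  then show ?thesis by blast
qed

lemma wnorm_twist_by_root_of_unity:
  fixes h :: "'a::field poly"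
  assumes h: "h \<noteq> 0" and w0: "w0 \<in> Rts h" "coprime (order w0 h) p" and p: "p > 0"
    and \<zeta>: "\<zeta> ^ p = 1" and \<beta>: "\<beta> \<in> Lbar_units h"
  shows "\<exists>\<beta>'\<in>Lbar_units h. (\<forall>w. \<beta>' w ^ p = \<beta> w ^ p) \<and> wnorm h \<beta>' = \<zeta> * wnorm h \<beta>"
proof -
  have "order w0 h \<noteq> 0" using w0(1) h by (simp add: Rts_def order_root)
  then obtain \<eta> where \<eta>: "\<eta> ^ p = 1" "\<eta> ^ order w0 h = \<zeta>"
    using root_of_unity_power_surj[OF \<zeta> w0(2)] by blast
  \<comment> \<open>rescale \<open>\<beta>\<close> at the single root \<open>w0\<close>, whose multiplicity is prime to \<open>p\<close>\<close>
  define \<beta>' where "\<beta>' = \<beta>(w0 := \<beta> w0 * \<eta>)"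
  have "\<eta> \<noteq> 0" using \<eta>(1) p by (auto simp: zero_power)
  then have "\<beta>' \<in> Lbar_units h" using \<beta> w0(1) by (simp add: \<beta>'_def Lbar_units_def)
  moreover have "\<beta>' w ^ p = \<beta> w ^ p" for w by (simp add: \<beta>'_def power_mult_distrib \<eta>(1))
  moreover have "wnorm h \<beta>' = \<zeta> * wnorm h \<beta>"
  proof -
    have fin: "finite (Rts h)" using h by (simp add: Rts_def poly_roots_finite)
    have "wnorm h \<beta>' = \<beta>' w0 ^ order w0 h * (\<Prod>w\<in>Rts h - {w0}. \<beta>' w ^ order w h)"
      unfolding wnorm_def using fin w0(1) by (rule prod.remove)
    also have "\<dots> = \<zeta> * (\<beta> w0 ^ order w0 h * (\<Prod>w\<in>Rts h - {w0}. \<beta> w ^ order w h))"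
      by (simp add: \<beta>'_def power_mult_distrib \<eta>(2))
    also have "\<beta> w0 ^ order w0 h * (\<Prod>w\<in>Rts h - {w0}. \<beta> w ^ order w h) = wnorm h \<beta>"
      unfolding wnorm_def using fin w0(1) by (rule prod.remove[symmetric])
    finally show ?thesis .
  qed
  ultimately show ?thesis by blast
qed

lemma norm_locus_subset_mcoset_bd:
  fixes k :: "'a::field set" and h :: "'a poly"
  assumes sc: "is_separable_closure_of k" and p: "p > 0" and pc: "of_nat p \<noteq> (0::'a::field)"
    and h: "h \<noteq> 0" and w0: "w0 \<in> Rts h" "coprime (order w0 h) p"
    and m: "m \<in> norm_locus h p t"
  shows "norm_locus h p t \<subseteq> mcoset m (bd p h ` Lbar_units h)"
proof
  fix x assume "x \<in> norm_locus h p t"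
  then obtain \<alpha> s where x: "x = (\<alpha>, s)" and \<alpha>: "\<alpha> \<in> Lbar_units h" "s \<noteq> 0" "t * wnorm h \<alpha> = s ^ p"
    by (auto simp: norm_locus_def)
  obtain \<gamma> f where m: "m = (\<gamma>, f)" and \<gamma>: "\<gamma> \<in> Lbar_units h" "f \<noteq> 0" "t * wnorm h \<gamma> = f ^ p"
    using assms by (auto simp: norm_locus_def)
  obtain \<beta>0 where \<beta>0: "\<beta>0 \<in> Lbar_units h" "\<And>w. w \<in> Rts h \<Longrightarrow> \<beta>0 w ^ p = \<alpha> w / \<gamma> w"
    using pth_roots_on_Rts[OF sc p pc, of h "\<lambda>w. \<alpha> w / \<gamma> w"] \<alpha>(1) \<gamma>(1)
    by (auto simp: Lbar_units_def)
  have \<alpha>_eq: "\<alpha> w = \<gamma> w * \<beta>0 w ^ p" for w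
    using \<beta>0 \<alpha>(1) \<gamma>(1) by (cases "w \<in> Rts h") (auto simp: Lbar_units_def)
  have N0: "wnorm h \<beta>0 \<noteq> 0" using \<beta>0(1) by (intro wnorm_nonzero) (simp add: Lbar_units_def)
  \<comment> \<open>\<open>\<beta>0\<close> has the right \<open>p\<close>-th power; its norm is off by a \<open>p\<close>-th root of unity \<open>\<zeta>\<close>\<close>
  define \<zeta> where "\<zeta> = s / (f * wnorm h \<beta>0)"
  have "\<alpha> = (\<lambda>w. \<gamma> w * \<beta>0 w ^ p)" using \<alpha>_eq by (rule ext)
  then have "s ^ p = t * wnorm h \<gamma> * wnorm h \<beta>0 ^ p"
    using \<alpha>(3) by (simp add: wnorm_mult_power mult.assoc)
  also have "\<dots> = (f * wnorm h \<beta>0) ^ p" using \<gamma>(3) by (simp add: power_mult_distrib)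
  finally have "(f * wnorm h \<beta>0) ^ p = s ^ p" ..
  then have "\<zeta> ^ p = 1" using \<gamma>(2) \<alpha>(2) N0 by (simp add: \<zeta>_def power_divide)
  from wnorm_twist_by_root_of_unity[OF h w0 p this \<beta>0(1)]
  obtain \<beta> where \<beta>: "\<beta> \<in> Lbar_units h" "\<And>w. \<beta> w ^ p = \<beta>0 w ^ p" "wnorm h \<beta> = \<zeta> * wnorm h \<beta>0"
    by blast
  have "mmul m (bd p h \<beta>) = (\<alpha>, s)"
    using \<beta>(2,3) \<gamma>(2) N0 by (simp add: m mmul_bd \<alpha>_eq \<zeta>_def fun_eq_iff)
  then show "x \<in> mcoset m (bd p h ` Lbar_units h)"
    unfolding mcoset_def x using \<beta>(1) by (metis image_eqI)
qed

lemma mcoset_bd_eq_norm_locus: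
  fixes k :: "'a::field set" and h :: "'a poly"
  assumes sc: "is_separable_closure_of k" and p: "p > 0" and pc: "of_nat p \<noteq> (0::'a::field)"
    and h: "h \<noteq> 0" and w0: "w0 \<in> Rts h" "coprime (order w0 h) p"
    and m: "m \<in> norm_locus h p t"
  shows "mcoset m (bd p h ` Lbar_units h) = norm_locus h p t"
  using mcoset_bd_subset_norm_locus[OF m] norm_locus_subset_mcoset_bd[OF assms] by (rule antisym)

lemma fdiv_in_norm_locus:
  fixes h :: "'a::field poly"
  assumes D: "good_divisor p c h D" and c: "c \<noteq> 0" and p: "p > 0"
    and h: "h \<noteq> 0" "lead_coeff h = 1" and split: "(\<Sum>w\<in>Rts h. order w h) = degree h"
  shows "fdiv h D \<in> norm_locus h p (c powi div_degree D)"
proof -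
  let ?S = "{P. D P \<noteq> 0}"
  have fin: "finite ?S" and pts: "\<And>P. P \<in> ?S \<Longrightarrow> snd P ^ p = c * poly h (fst P) \<and> snd P \<noteq> 0"
    using D by (auto simp: good_divisor_def good_points_def)
  have hx: "poly h (fst P) = snd P ^ p / c" if "P \<in> ?S" for P
    using pts[OF that] c by (simp add: field_simps)
  have "fst P - w \<noteq> 0" if "P \<in> ?S" "w \<in> Rts h" for P w
    using hx[OF that(1)] pts[OF that(1)] that(2) c p by (auto simp: Rts_def)
  then have "fst (fdiv h D) \<in> Lbar_units h" using fin by (auto simp: fdiv_def Lbar_units_def prod_zero_iff)
  moreover have "snd (fdiv h D) \<noteq> 0" using pts fin by (auto simp: fdiv_def prod_zero_iff)
  \<comment> \<open>on the curve, \<open>N(x - x(\<omega>)) = h(x) = y\<^sup>p / c\<close>\<close>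
  moreover have "c powi div_degree D * wnorm h (fst (fdiv h D)) = snd (fdiv h D) ^ p"
  proof -
    have "wnorm h (fst (fdiv h D)) = (\<Prod>w\<in>Rts h. (\<Prod>P\<in>?S. (fst P - w) powi D P) ^ order w h)"
      unfolding wnorm_def fdiv_def by (rule prod.cong) auto
    also have "\<dots> = (\<Prod>P\<in>?S. \<Prod>w\<in>Rts h. ((fst P - w) ^ order w h) powi D P)"
      by (subst prod.swap) (simp add: prod_power_distrib power_int_power' power_int_power mult.commute)
    also have "\<dots> = (\<Prod>P\<in>?S. poly h (fst P) powi D P)"
      by (subst (2) monic_split_eq_prod[OF h split]) (simp add: poly_prod power_int_prod)
    also have "\<dots> = (\<Prod>P\<in>?S. (snd P powi D P) ^ p / c powi D P)"
      by (rule prod.cong)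
        (auto simp: hx power_int_divide_distrib power_int_power' power_int_power mult.commute)
    also have "\<dots> = snd (fdiv h D) ^ p / c powi div_degree D"
      by (simp add: prod_dividef prod_power_distrib prod_power_int_eq_power_int_sum[OF c]
          fdiv_def div_degree_def)
    finally show ?thesis using c by (simp add: power_int_not_zero)
  qed
  ultimately show ?thesis by (simp add: norm_locus_def case_prod_beta)
qed

section \<open>Galois invariants\<close>

lemma gact_fixed_iff:
  assumes "\<alpha> \<in> Lbar_units h"
  shows "gact h \<sigma> (\<alpha>, s) = (\<alpha>, s) \<longleftrightarrow> (\<forall>w\<in>Rts h. \<sigma> (\<alpha> (inv \<sigma> w)) = \<alpha> w) \<and> \<sigma> s = s"
  using assms by (auto simp: gact_def Lbar_units_def fun_eq_iff)

lemma L_units_iff_Gal_invariant: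
  assumes sc: "is_separable_closure_of k" and h: "poly_over k h" "h \<noteq> 0" and \<alpha>: "\<alpha> \<in> Lbar_units h"
  shows "\<alpha> \<in> L_units k h \<longleftrightarrow> (\<forall>\<sigma>\<in>Gal k. \<forall>w\<in>Rts h. \<sigma> (\<alpha> (inv \<sigma> w)) = \<alpha> w)"
proof
  have ks: "is_subfield k" using sc by (rule separable_closure_subfield)
  assume "\<alpha> \<in> L_units k h"
  then obtain g where g: "poly_over k g" "\<forall>w\<in>Rts h. \<alpha> w = poly g w" by (auto simp: L_units_def)
  show "\<forall>\<sigma>\<in>Gal k. \<forall>w\<in>Rts h. \<sigma> (\<alpha> (inv \<sigma> w)) = \<alpha> w"
  proof (intro ballI)
    fix \<sigma> w assume \<sigma>: "\<sigma> \<in> Gal k" and w: "w \<in> Rts h"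
    then have "inv \<sigma> w \<in> Rts h" using Gal_inv_in_Rts_iff[OF ks \<sigma> h(1)] by simp
    then show "\<sigma> (\<alpha> (inv \<sigma> w)) = \<alpha> w"
      using g w by (simp add: Gal_poly[OF ks \<sigma> g(1)] Gal_apply_inv[OF \<sigma>])
  qed
next
  assume "\<forall>\<sigma>\<in>Gal k. \<forall>w\<in>Rts h. \<sigma> (\<alpha> (inv \<sigma> w)) = \<alpha> w"
  then show "\<alpha> \<in> L_units k h"
    using Gal_invariant_function_on_Rts[OF sc h] \<alpha> by (simp add: L_units_def)
qed

lemma invariants_norm_locus:
  assumes sc: "is_separable_closure_of k" and h: "poly_over k h" "h \<noteq> 0"
  shows "invariants k h (norm_locus h p t)
    = {(\<alpha>, s). \<alpha> \<in> L_units k h \<and> s \<in> k \<and> s \<noteq> 0 \<and> t * wnorm h \<alpha> = s ^ p}"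
proof -
  have base: "s \<in> k \<longleftrightarrow> (\<forall>\<sigma>\<in>Gal k. \<sigma> s = s)" for s
    using Gal_fixed_imp_base[OF sc] Gal_fixes by blast
  have "(\<alpha>, s) \<in> invariants k h (norm_locus h p t) \<longleftrightarrow>
      \<alpha> \<in> L_units k h \<and> s \<in> k \<and> s \<noteq> 0 \<and> t * wnorm h \<alpha> = s ^ p" for \<alpha> s
  proof (cases "\<alpha> \<in> Lbar_units h")
    case True
    then show ?thesis
      by (auto simp: invariants_def norm_locus_def gact_fixed_iff base
          L_units_iff_Gal_invariant[OF sc h True])
  qed (simp add: invariants_def norm_locus_def L_units_def)
  then show ?thesis by (auto simp: set_eq_iff)
qed

theorem lemma4p3:
  fixes k :: "'a::field set" and p :: nat and c :: 'a and h :: "'a poly" and r :: int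
  assumes "prime p"
    and "is_separable_closure_of k"
    and "of_nat p \<noteq> (0::'a)"
    and "\<forall>z::'a. z ^ p = 1 \<longrightarrow> z \<in> k"
    and "c \<in> k" and "c \<noteq> 0"
    and "poly_over k h" and "lead_coeff h = 1" and "degree h > 0"
    and "\<forall>g. poly_over k g \<and> degree g > 0 \<longrightarrow> \<not> (g ^ p dvd h)"
    and "p dvd degree h"
    and "(\<Sum>\<omega>\<in>Rts h. order \<omega> h) = degree h"
  shows "(\<forall>D. good_divisor p c h D \<and> div_degree D = r \<longrightarrow>
            Hcal k p c h r = (\<lambda>m. mcoset m (Hsub k p h)) `
               invariants k h (mcoset (fdiv h D) (bd p h ` Lbar_units h)))
       \<and> Hcal k p c h 0 = (\<lambda>m. mcoset m (Hsub k p h)) ` invariants k h (bd p h ` Lbar_units h)"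
proof -
  have p: "p > 0" using \<open>prime p\<close> by (simp add: prime_gt_0_nat)
  have h0: "h \<noteq> 0" using \<open>degree h > 0\<close> by auto
  obtain w0 where w0: "w0 \<in> Rts h" "coprime (order w0 h) p"
    using exists_root_order_not_dvd[OF assms(2) p assms(3,7,8,9,10,12)] \<open>prime p\<close>
    by (metis coprime_commute prime_imp_coprime)
  have coset: "mcoset (fdiv h D) (bd p h ` Lbar_units h) = norm_locus h p (c powi div_degree D)"
    if "good_divisor p c h D" for D
    using mcoset_bd_eq_norm_locus[OF assms(2) p assms(3) h0 w0
        fdiv_in_norm_locus[OF that \<open>c \<noteq> 0\<close> p h0 assms(8,12)]] .
  have Hcal: "Hcal k p c h (div_degree D) = (\<lambda>m. mcoset m (Hsub k p h)) `
      invariants k h (mcoset (fdiv h D) (bd p h ` Lbar_units h))" if "good_divisor p c h D" for D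
    unfolding Hcal_def coset[OF that] invariants_norm_locus[OF assms(2,7) h0] ..
  have "good_divisor p c h (\<lambda>_. 0)" "div_degree (\<lambda>_ :: 'a \<times> 'a. 0 :: int) = 0"
    by (simp_all add: good_divisor_def div_degree_def)
  moreover have "fdiv h (\<lambda>_. 0) = ((\<lambda>_. 1), 1)" by (simp add: fdiv_def fun_eq_iff)
  then have "mcoset (fdiv h (\<lambda>_. 0)) X = X" for X by (simp add: mcoset_def mmul_def)
  ultimately show ?thesis using Hcal by metis
qed

end
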